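(* Let $n_1,n_2,n_3$ be pairwise coprime positive integers forming a minimal system of generators of $\mathcal S=\langle n_1,n_2,n_3\rangle$, and let $\{i,j,k\}=\{1,2,3\}$. Put $\lambda_{ij}=[-n_in_j^{-1}]_{n_k}$ and $\lambda_{ik}=[-n_in_k^{-1}]_{n_j}$. Then $\lambda_{ij},\lambda_{ik}$ are positive integers and $$n_i=n_jn_k-\lambda_{ij}n_j-\lambda_{ik}n_k .$$
   Context: $\mathbb N$ denotes the nonnegative integers. For integers $a_1,\dots,a_r$, $\langle a_1,\dots,a_r\rangle=\{\sum t_la_l: t_l\in\mathbb N\}$. Minimal system of generators means that no $n_l$ belongs to the monoid generated by the other two. For an integer $m$ and $n\ge 1$, $[m]_n\in\{0,\dots,n-1\}$ denotes the remainder of $m$ upon division by $n$; for $a$ coprime to $n$, the symbol $a^{-1}$ inside $[\cdot]_n$ denotes a multiplicative inverse of $a$ modulo $n$ (the remainder does not depend on the choice). *)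

theory Defs
  imports "HOL-Number_Theory.Number_Theory"
begin

definition monoid_gen :: "int list \<Rightarrow> int set" where
  "monoid_gen as = {sum_list (map2 (\<lambda>t a. int t * a) ts as) | ts :: nat list. length ts = length as}"

text \<open>A multiplicative inverse of a modulo m (any choice; only used inside a remainder).\<close>
definition inv_mod :: "int \<Rightarrow> int \<Rightarrow> int" where
  "inv_mod a m = (SOME u. [a * u = 1] (mod m))"

definition lam :: "int \<Rightarrow> int \<Rightarrow> int \<Rightarrow> int" where
  "lam a b m = (- a * inv_mod b m) mod m"

end

theory Submission
  imports Defs
begin

text \<open>Since \<open>n\<^sub>j\<close> and \<open>n\<^sub>k\<close> are coprime, the integer
  \<open>x = n\<^sub>j n\<^sub>k - \<lambda>\<^sub>i\<^sub>j n\<^sub>j - \<lambda>\<^sub>i\<^sub>k n\<^sub>k\<close> is congruent to \<open>n\<^sub>i\<close> modulo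
  \<open>n\<^sub>j n\<^sub>k\<close>, and \<open>x \<le> n\<^sub>j n\<^sub>k\<close> because the remainders are nonnegative. So \<open>n\<^sub>i = x - m n\<^sub>j n\<^sub>k\<close>
  with \<open>m \<ge> 0\<close> as \<open>n\<^sub>i > 0\<close>. If \<open>m > 0\<close>, or if one of the remainders vanishes, the bounds
  \<open>\<lambda>\<^sub>i\<^sub>j < n\<^sub>k\<close>, \<open>\<lambda>\<^sub>i\<^sub>k < n\<^sub>j\<close> exhibit \<open>n\<^sub>i\<close> as a nonnegative combination of \<open>n\<^sub>j, n\<^sub>k\<close>,
  contradicting minimality.\<close>

lemma monoid_gen_pair_iff:
  "x \<in> monoid_gen [b, c] \<longleftrightarrow> (\<exists>t s :: nat. x = int t * b + int s * c)"
proof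
  assume "x \<in> monoid_gen [b, c]"
  then obtain ts :: "nat list"
    where "length ts = length [b, c]" "x = sum_list (map2 (\<lambda>t a. int t * a) ts [b, c])"
    unfolding monoid_gen_def by blast
  then show "\<exists>t s :: nat. x = int t * b + int s * c"
    by (cases ts rule: list.exhaust; cases "tl ts" rule: list.exhaust) auto
next
  assume "\<exists>t s :: nat. x = int t * b + int s * c"
  then obtain t s :: nat where "x = int t * b + int s * c" by blast
  then show "x \<in> monoid_gen [b, c]"
    unfolding monoid_gen_def by (intro CollectI exI[of _ "[t, s]"]) auto
qed

lemma monoid_gen_pair_commute: "monoid_gen [b, c] = monoid_gen [c, b]"
  unfolding set_eq_iff monoid_gen_pair_iff by (metis add.commute)

lemma monoid_gen_pairI:
  assumes "p \<ge> 0" "q \<ge> 0"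
  shows "p * b + q * c \<in> monoid_gen [b, c]"
  unfolding monoid_gen_pair_iff
  using assms by (intro exI[of _ "nat p"] exI[of _ "nat q"]) simp

lemma lam_bounds:
  "c > 0 \<Longrightarrow> 0 \<le> lam a b c \<and> lam a b c < c"
  by (simp add: lam_def)

lemma lam_mult_add_dvd:
  assumes "coprime b c"
  shows "c dvd lam a b c * b + a"
proof -
  have "\<exists>u. [b * u = 1] (mod c)"
    using cong_solve_coprime_int assms by blast
  then have inv: "[b * inv_mod b c = 1] (mod c)"
    unfolding inv_mod_def by (rule someI_ex)
  have "[lam a b c * b = (- a * inv_mod b c) * b] (mod c)"
    unfolding lam_def by (simp add: cong_def mod_mult_left_eq)
  also have "(- a * inv_mod b c) * b = - a * (b * inv_mod b c)"
    by (simp add: ac_simps)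
  also have "[- a * (b * inv_mod b c) = - a * 1] (mod c)"
    using inv by (rule cong_mult[OF cong_refl])
  finally show ?thesis
    by (simp add: cong_iff_dvd_diff)
qed

lemma lam_combination_cong:
  assumes "coprime b c"
  shows "b * c dvd (b * c - lam a b c * b - lam a c b * c) - a"
proof -
  let ?x = "b * c - lam a b c * b - lam a c b * c"
  have "?x - a = b * (c - lam a b c) - (lam a c b * c + a)"
    by (simp add: algebra_simps)
  moreover have "b dvd lam a c b * c + a"
    using assms by (simp add: lam_mult_add_dvd coprime_commute)
  ultimately have "b dvd ?x - a"
    by (metis dvd_diff dvd_triv_left)
  moreover have "?x - a = c * (b - lam a c b) - (lam a b c * b + a)"
    by (simp add: algebra_simps)
  moreover have "c dvd lam a b c * b + a"
    using assms by (rule lam_mult_add_dvd)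
  ultimately show ?thesis
    using assms by (metis divides_mult dvd_diff dvd_triv_left)
qed

lemma lam_combination_eq:
  fixes a b c :: int
  assumes pos: "a > 0" "b > 0" "c > 0"
    and coprime: "coprime b c"
    and not_gen: "a \<notin> monoid_gen [b, c]"
  shows "lam a b c > 0 \<and> lam a c b > 0 \<and> a = b * c - lam a b c * b - lam a c b * c"
proof -
  define L1 where "L1 = lam a b c"
  define L2 where "L2 = lam a c b"
  have L1: "0 \<le> L1" "L1 < c" and L2: "0 \<le> L2" "L2 < b"
    using lam_bounds pos unfolding L1_def L2_def by auto
  obtain m where m: "b * c - L1 * b - L2 * c - a = b * c * m"
    using lam_combination_cong[OF coprime] unfolding L1_def L2_def by blast
  have "m \<le> 0"
  proof (rule ccontr)
    assume "\<not> m \<le> 0"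
    then have "b * c * 1 \<le> b * c * m"
      using pos by (intro mult_left_mono) auto
    moreover have "0 \<le> L1 * b + L2 * c"
      using L1 L2 pos by simp
    ultimately show False
      using m pos by linarith
  qed
  moreover have "\<not> m < 0"
  proof
    assume "m < 0"
    then have "0 \<le> c * (- m) - L1"
      using L1 pos by (smt (verit) mult_le_cancel_left1)
    moreover have "a = (c * (- m) - L1) * b + (b - L2) * c"
      using m by (simp add: algebra_simps)
    ultimately show False
      using not_gen monoid_gen_pairI L2 by (metis diff_ge_0_iff_ge less_imp_le)
  qed
  ultimately have a: "a = b * c - L1 * b - L2 * c"
    using m by simp
  have "L1 \<noteq> 0"
  proof
    assume "L1 = 0"
    then have "a = 0 * b + (b - L2) * c"
      using a by (simp add: algebra_simps)
    then show False
      using not_gen monoid_gen_pairI[of 0 "b - L2" b c] L2 by simp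
  qed
  moreover have "L2 \<noteq> 0"
  proof
    assume "L2 = 0"
    then have "a = (c - L1) * b + 0 * c"
      using a by (simp add: algebra_simps)
    then show False
      using not_gen monoid_gen_pairI[of "c - L1" 0 b c] L1 by simp
  qed
  ultimately show ?thesis
    using L1 L2 a unfolding L1_def L2_def by simp
qed

theorem mainTheorem1:
  fixes n :: "nat \<Rightarrow> int" and i j k :: nat
  assumes pos: "\<forall>l\<in>{1,2,3}. n l > 0"
    and coprime: "\<forall>a\<in>{1,2,3}. \<forall>b\<in>{1,2,3}. a \<noteq> b \<longrightarrow> coprime (n a) (n b)"
    and minimal: "n 1 \<notin> monoid_gen [n 2, n 3]" "n 2 \<notin> monoid_gen [n 1, n 3]"
                 "n 3 \<notin> monoid_gen [n 1, n 2]"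
    and ijk: "{i, j, k} = {1, 2, 3}"
  shows "lam (n i) (n j) (n k) > 0 \<and> lam (n i) (n k) (n j) > 0 \<and>
         n i = n j * n k - lam (n i) (n j) (n k) * n j - lam (n i) (n k) (n j) * n k"
proof -
  have ijk_in: "i \<in> {1,2,3}" "j \<in> {1,2,3}" "k \<in> {1,2,3}"
    using ijk by blast+
  have distinct: "i \<noteq> j \<and> i \<noteq> k \<and> j \<noteq> k"
  proof -
    have "1 \<in> {i,j,k}" "2 \<in> {i,j,k}" "3 \<in> {i,j,k}"
      using ijk by blast+
    then show ?thesis
      by auto
  qed
  then have "n i \<notin> monoid_gen [n j, n k]"
    using ijk_in minimal monoid_gen_pair_commute by auto
  moreover have "n i > 0" "n j > 0" "n k > 0" "coprime (n j) (n k)"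
    using pos coprime ijk_in distinct by auto
  ultimately show ?thesis
    by (intro lam_combination_eq) simp_all
qed

end
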